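(* Let $I,S\ge 0$ and $j$ be integers with $L(I,S)\le j\le\lfloor I/2\rfloor$, and consider the pairing process described in the context. Let $N(I,S,j)$ be the number of distinct sets of bb-pairings that arise as the set of bb-pairings of some possible wiring with exactly $j$ bb-pairings. Then: if $(I,S,j)$ is not in the dagger case, $N(I,S,j)=\frac{1}{j!}\prod_{k=1}^{j}\binom{I-2(k-1)}{2}$; in the dagger case with $j=0$, $N(I,S,j)=1$; in the dagger case with $j=1$, $N(I,S,j)=\binom{I}{2}-1$; in the dagger case with $j\ge 2$, $N(I,S,j)=\sum_{h=S+1}^{I}N_\dagger(I,S,h)$, where $N_\dagger$ is as defined in the context.
   Context: Pairing process: there are $I$ infected devices $b_1,\dots,b_I$ and $S$ clean devices $w_1,\dots,w_S$. For $t=1,\dots,I$ in this order: if $b_t$ is not yet paired and at least one device other than $b_t$ is not yet paired, then $b_t$ chooses one of the currently unpaired devices other than itself uniformly at random, independently of previous choices, and becomes paired with it; otherwise $b_t$ does nothing. Each device belongs to at most one pair. The wiring is the final set of pairs; a bb-pairing is a pair consisting of two infected devices; a wiring is possible if it occurs with positive probability. $L(I,S)=0$ if $I\le S$; $L(I,S)=\frac{I-S}{2}$ if $I>S$ and $I-S$ is even; $L(I,S)=\frac{I-S-1}{2}$ if $I>S$ and $I-S$ is odd. $(I,S,j)$ is in the dagger case if $I>S$, $I+S$ is odd and $j=\frac{I-S-1}{2}$. In the dagger case with $j\ge2$ and $S+1\le h\le I$: $N_\dagger(I,S,I)=\frac{1}{j!}\prod_{k=0}^{j-1}\binom{I-1-2k}{2}$,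 $N_\dagger(I,S,I-1)=\frac{1}{(j-1)!}(I-2)\prod_{k=0}^{j-2}\binom{I-3-2k}{2}$, and for $S+1\le h\le I-2$: $N_\dagger(I,S,h)=0$ if $j<I-h$, $=\prod_{t=1}^{I-h}(h-t)$ if $j=I-h$, and $=\frac{1}{(j-I+h)!}\prod_{t=1}^{I-h}(h-t)\prod_{t=1}^{j-I+h}\binom{2h-I-1-2(t-1)}{2}$ if $j>I-h$. *)

theory Defs
  imports Complex_Main
begin

text \<open>Devices: infected devices B 1, ..., B I and clean devices W 1, ..., W S.\<close>
datatype dev = B nat | W nat

definition devices :: "nat \<Rightarrow> nat \<Rightarrow> dev set" where
  "devices I S = B ` {1..I} \<union> W ` {1..S}"

definition unpaired :: "nat \<Rightarrow> nat \<Rightarrow> dev set set \<Rightarrow> dev set" where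
  "unpaired I S M = devices I S - \<Union> M"

text \<open>reach I S t M: the partial wiring M can occur (with positive probability)
  after steps 1..t of the pairing process.\<close>
inductive reach :: "nat \<Rightarrow> nat \<Rightarrow> nat \<Rightarrow> dev set set \<Rightarrow> bool" for I S where
  start: "reach I S 0 {}"
| idle: "\<lbrakk> reach I S t M; t < I;
           B (Suc t) \<notin> unpaired I S M \<or> unpaired I S M - {B (Suc t)} = {} \<rbrakk>
         \<Longrightarrow> reach I S (Suc t) M"
| choose: "\<lbrakk> reach I S t M; t < I; B (Suc t) \<in> unpaired I S M;
             d \<in> unpaired I S M; d \<noteq> B (Suc t) \<rbrakk>
         \<Longrightarrow> reach I S (Suc t) (insert {B (Suc t), d} M)"

definition possible_wiring :: "nat \<Rightarrow> nat \<Rightarrow> dev set set \<Rightarrow> bool" where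
  "possible_wiring I S M \<longleftrightarrow> reach I S I M"

definition is_inf :: "dev \<Rightarrow> bool" where
  "is_inf d \<longleftrightarrow> (\<exists>t. d = B t)"

definition bb_pairings :: "dev set set \<Rightarrow> dev set set" where
  "bb_pairings M = {p \<in> M. \<forall>x\<in>p. is_inf x}"

definition Ncount :: "nat \<Rightarrow> nat \<Rightarrow> nat \<Rightarrow> nat" where
  "Ncount I S j = card {bb_pairings M | M. possible_wiring I S M \<and> card (bb_pairings M) = j}"

definition L :: "nat \<Rightarrow> nat \<Rightarrow> nat" where
  "L I S = (if I \<le> S then 0 else if even (I - S) then (I - S) div 2 else (I - S - 1) div 2)"

definition dagger_case :: "nat \<Rightarrow> nat \<Rightarrow> nat \<Rightarrow> bool" where
  "dagger_case I S j \<longleftrightarrow> I > S \<and> odd (I + S) \<and> 2 * j = I - S - 1"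

text \<open>N_dagger(I,S,h), with j = (I-S-1)/2 (meaningful for j \<ge> 2, S+1 \<le> h \<le> I).
  Binomials (x choose 2) of integer arguments are written as x gchoose 2.\<close>
definition N_dagger :: "nat \<Rightarrow> nat \<Rightarrow> nat \<Rightarrow> real" where
  "N_dagger I S h = (let j = (I - S - 1) div 2 in
     if h = I then
       1 / fact j * (\<Prod>k<j. (real I - 1 - 2 * real k) gchoose 2)
     else if h = I - 1 then
       1 / fact (j - 1) * (real I - 2) * (\<Prod>k<j-1. (real I - 3 - 2 * real k) gchoose 2)
     else if j < I - h then 0
     else if j = I - h then (\<Prod>t=1..I-h. real h - real t)
     else 1 / fact (j - (I - h)) * (\<Prod>t=1..I-h. real h - real t)
            * (\<Prod>t=1..j-(I-h). (2 * real h - real I - 1 - 2 * (real t - 1)) gchoose 2))"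

end

theory Submission
  imports Defs
begin

text \<open>
  A set of pairs is a possible wiring iff every pair has a chooser, the infected device of
  smallest index in it, and every infected device left unpaired found at its turn all other
  devices paired, i.e.\ every pair was chosen before it. So the bb-pairings of a wiring form a
  matching of the infected devices, and conversely a matching that leaves at most \<open>S\<close> infected
  devices unmatched extends to a wiring by pairing these with distinct clean devices. Outside the
  dagger case this makes the counted sets exactly the \<open>j\<close>-matchings of \<open>I\<close> points.
  In the dagger case \<open>S + 1\<close> infected devices stay unmatched, so exactly one of them,
  \<open>B h\<close>, stays unpaired. Then every infected device above \<open>h\<close> is matched, each to one below
  \<open>h\<close>, and summing over \<open>h\<close> the number of such matchings gives the formula.
\<close>

section \<open>Matchings\<close>

definition two_subsets :: "'a set \<Rightarrow> 'a set set" where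
  "two_subsets A = {p. p \<subseteq> A \<and> card p = 2}"

definition matching :: "'a set \<Rightarrow> 'a set set \<Rightarrow> bool" where
  "matching A P \<longleftrightarrow> P \<subseteq> two_subsets A \<and> pairwise disjnt P"

definition matchings :: "'a set \<Rightarrow> nat \<Rightarrow> 'a set set set" where
  "matchings A m = {P. matching A P \<and> card P = m}"

lemma finite_two_subsets: "finite A \<Longrightarrow> finite (two_subsets A)"
  by (rule finite_subset[of _ "Pow A"]) (auto simp: two_subsets_def)

lemma card_two_subsets: "finite A \<Longrightarrow> card (two_subsets A) = card A choose 2"
  unfolding two_subsets_def by (rule n_subsets)

lemma two_subsets_mono: "A \<subseteq> A' \<Longrightarrow> two_subsets A \<subseteq> two_subsets A'"
  by (auto simp: two_subsets_def)

lemma Union_matching_subset: "matching A P \<Longrightarrow> \<Union>P \<subseteq> A"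
  by (auto simp: matching_def two_subsets_def)

lemma matching_mono: "matching A P \<Longrightarrow> A \<subseteq> A' \<Longrightarrow> matching A' P"
  unfolding matching_def using two_subsets_mono by blast

lemma matching_finite: "finite A \<Longrightarrow> matching A P \<Longrightarrow> finite P"
  by (rule finite_subset[of _ "Pow A"]) (auto simp: matching_def two_subsets_def)

lemma finite_matchings: "finite A \<Longrightarrow> finite (matchings A m)"
  by (rule finite_subset[of _ "Pow (Pow A)"]) (auto simp: matchings_def matching_def two_subsets_def)

lemma matchings_0: "finite A \<Longrightarrow> matchings A 0 = {{}}"
  by (auto simp: matchings_def matching_def dest: matching_finite)

lemma card_Union_matching:
  assumes "finite A" "matching A P"
  shows "card (\<Union>P) = 2 * card P"
proof -
  have "card (\<Union>P) = sum card P"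
    using assms by (intro card_Union_disjoint)
      (auto simp: matching_def two_subsets_def intro: finite_subset)
  also have "\<dots> = sum (\<lambda>_. 2) P"
    using assms(2) by (intro sum.cong) (auto simp: matching_def two_subsets_def)
  finally show ?thesis by simp
qed

lemma matching_remove:
  assumes "matching A P" "p \<in> P"
  shows "matching (A - p) (P - {p})"
  using assms unfolding matching_def two_subsets_def pairwise_def disjnt_def by blast

lemma matching_insert:
  assumes "p \<in> two_subsets A" "matching (A - p) Q"
  shows "matching A (insert p Q)" and "p \<notin> Q"
proof -
  have Q: "q \<subseteq> A - p" if "q \<in> Q" for q
    using assms(2) that by (auto simp: matching_def two_subsets_def)
  have "p \<noteq> {}" using assms(1) by (auto simp: two_subsets_def)
  then show "p \<notin> Q" using Q by blast
  show "matching A (insert p Q)"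
    using assms Q unfolding matching_def two_subsets_def pairwise_insert disjnt_def by blast
qed

fun num_matchings :: "nat \<Rightarrow> nat \<Rightarrow> real" where
  "num_matchings n 0 = 1"
| "num_matchings n (Suc m) = (real n gchoose 2) / real (Suc m) * num_matchings (n - 2) m"

text \<open>Double counting: a matching with a marked pair is a pair together with a matching
  of the remaining points.\<close>

lemma matchings_Suc_bij:
  assumes "finite A"
  shows "bij_betw (\<lambda>(P, p). (p, P - {p}))
           (SIGMA P:matchings A (Suc m). P) (SIGMA p:two_subsets A. matchings (A - p) m)"
proof (rule bij_betw_byWitness[where f' = "\<lambda>(p, Q). (insert p Q, p)"])
  show "(\<lambda>(P, p). (p, P - {p})) ` (SIGMA P:matchings A (Suc m). P)
          \<subseteq> (SIGMA p:two_subsets A. matchings (A - p) m)"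
  proof clarify
    fix P p assume "P \<in> matchings A (Suc m)" "p \<in> P"
    moreover from this have "finite P"
      using assms by (auto simp: matchings_def dest: matching_finite)
    ultimately show "p \<in> two_subsets A \<and> P - {p} \<in> matchings (A - p) m"
      using matching_remove[of A P p] by (auto simp: matchings_def matching_def)
  qed
  show "(\<lambda>(p, Q). (insert p Q, p)) ` (SIGMA p:two_subsets A. matchings (A - p) m)
          \<subseteq> (SIGMA P:matchings A (Suc m). P)"
  proof clarify
    fix p Q assume p: "p \<in> two_subsets A" and "Q \<in> matchings (A - p) m"
    then have Q: "matching (A - p) Q" "card Q = m" by (auto simp: matchings_def)
    moreover have "finite Q" using assms Q(1) by (blast intro: matching_finite)
    ultimately show "insert p Q \<in> matchings A (Suc m) \<and> p \<in> insert p Q"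
      using matching_insert[OF p Q(1)] by (simp add: matchings_def)
  qed
qed (auto simp: insert_absorb matchings_def dest: matching_insert(2))

lemma card_matchings:
  "finite A \<Longrightarrow> real (card (matchings A m)) = num_matchings (card A) m"
proof (induction m arbitrary: A)
  case 0
  then show ?case by (simp add: matchings_0)
next
  case (Suc m)
  have "card (SIGMA P:matchings A (Suc m). P) = (\<Sum>P\<in>matchings A (Suc m). card P)"
    using Suc.prems
    by (intro card_SigmaI finite_matchings) (auto simp: matchings_def dest: matching_finite)
  also have "\<dots> = Suc m * card (matchings A (Suc m))"
    by (simp add: matchings_def)
  finally have lhs: "card (SIGMA P:matchings A (Suc m). P) = Suc m * card (matchings A (Suc m))" .
  have "real (card (matchings (A - p) m)) = num_matchings (card A - 2) m"
    if "p \<in> two_subsets A" for p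
    using that Suc by (auto simp: two_subsets_def card_Diff_subset finite_subset)
  then have "real (card (SIGMA p:two_subsets A. matchings (A - p) m))
      = real (card A choose 2) * num_matchings (card A - 2) m"
    using Suc.prems
    by (simp add: card_SigmaI finite_two_subsets finite_matchings card_two_subsets)
  then have "real (Suc m) * real (card (matchings A (Suc m)))
      = real (card A choose 2) * num_matchings (card A - 2) m"
    using lhs bij_betw_same_card[OF matchings_Suc_bij[OF Suc.prems]] by (metis of_nat_mult)
  then show ?case
    by (simp add: binomial_gbinomial field_simps del: of_nat_Suc)
qed

lemma num_matchings_eq:
  "num_matchings n m = 1 / fact m * (\<Prod>k=1..m. real (n - 2 * (k - 1)) gchoose 2)"
proof (induction m arbitrary: n)
  case 0
  then show ?case by simp
next
  case (Suc m)
  have "(\<Prod>k=1..Suc m. real (n - 2 * (k - 1)) gchoose 2)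
      = (real n gchoose 2) * (\<Prod>k=1..m. real (n - 2 * k) gchoose 2)"
    by (simp add: prod.atLeast_Suc_atMost prod.shift_bounds_cl_Suc_ivl del: prod.cl_ivl_Suc)
  also have "(\<Prod>k=1..m. real (n - 2 * k) gchoose 2) = (\<Prod>k=1..m. real (n - 2 - 2 * (k - 1)) gchoose 2)"
    by (intro prod.cong refl arg_cong[where f = "\<lambda>k. real k gchoose 2"]) auto
  finally show ?case
    by (simp add: Suc.IH del: of_nat_Suc)
qed

section \<open>Matchings covering a set\<close>

text \<open>In the dagger case \<open>Hi\<close> and \<open>Lo\<close> are the infected devices above and below the one that
  stays unpaired.\<close>

definition covering_matchings :: "'a set \<Rightarrow> 'a set \<Rightarrow> nat \<Rightarrow> 'a set set set" where
  "covering_matchings Hi Lo m = {P \<in> matchings (Hi \<union> Lo) m. Hi \<subseteq> \<Union>P \<and> (\<forall>p\<in>P. \<not> p \<subseteq> Hi)}"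

text \<open>A fixed point of \<open>Hi\<close> picks its partner among the \<open>l\<close> points of \<open>Lo\<close>.\<close>

fun num_covering_matchings :: "nat \<Rightarrow> nat \<Rightarrow> nat \<Rightarrow> real" where
  "num_covering_matchings 0 l m = num_matchings l m"
| "num_covering_matchings (Suc k) l 0 = 0"
| "num_covering_matchings (Suc k) l (Suc m) = real l * num_covering_matchings k (l - 1) m"

lemma covering_matchings_empty: "covering_matchings {} Lo m = matchings Lo m"
  by (auto simp: covering_matchings_def matchings_def matching_def two_subsets_def)

lemma covering_matchings_0:
  "Hi \<noteq> {} \<Longrightarrow> finite (Hi \<union> Lo) \<Longrightarrow> covering_matchings Hi Lo 0 = {}"
  using matchings_0[of "Hi \<union> Lo"] by (auto simp: covering_matchings_def)

lemma finite_covering_matchings: "finite (Hi \<union> Lo) \<Longrightarrow> finite (covering_matchings Hi Lo m)"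
  by (rule finite_subset[OF _ finite_matchings]) (auto simp: covering_matchings_def)

lemma covering_matching_partner:
  assumes "P \<in> covering_matchings Hi Lo m" "x \<in> Hi" "Hi \<inter> Lo = {}"
  obtains y where "y \<in> Lo" "{x, y} \<in> P"
proof -
  have P: "matching (Hi \<union> Lo) P" "Hi \<subseteq> \<Union>P" "\<forall>p\<in>P. \<not> p \<subseteq> Hi"
    using assms(1) by (auto simp: covering_matchings_def matchings_def)
  obtain p where "p \<in> P" "x \<in> p" using P(2) assms(2) by blast
  then have p: "p \<in> P" "x \<in> p" "\<not> p \<subseteq> Hi" "p \<in> two_subsets (Hi \<union> Lo)"
    using P by (auto simp: matching_def)
  then obtain y where y: "y \<in> p" "y \<notin> Hi" by blast
  with p(4) have "y \<in> Lo" by (auto simp: two_subsets_def)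
  moreover have "p = {x, y}"
    using p(2,4) y assms(2) by (auto simp: two_subsets_def card_2_iff)
  ultimately show thesis using that p(1) by blast
qed

lemma covering_matchings_remove_edge:
  assumes "x \<in> Hi" "y \<in> Lo" "Hi \<inter> Lo = {}"
    and "P \<in> covering_matchings Hi Lo (Suc m)" "{x, y} \<in> P" "finite (Hi \<union> Lo)"
  shows "P - {{x, y}} \<in> covering_matchings (Hi - {x}) (Lo - {y}) m"
proof -
  have HL: "(Hi \<union> Lo) - {x, y} = (Hi - {x}) \<union> (Lo - {y})" using assms(1-3) by auto
  have P: "matching (Hi \<union> Lo) P" "card P = Suc m" "Hi \<subseteq> \<Union>P" "\<forall>p\<in>P. \<not> p \<subseteq> Hi"
    using assms(4) by (auto simp: covering_matchings_def matchings_def)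
  have "finite P" using assms(6) P(1) by (rule matching_finite)
  moreover have "Hi - {x} \<subseteq> \<Union>(P - {{x, y}})" using P(3) assms(1-3) by blast
  ultimately show ?thesis
    using matching_remove[OF P(1) assms(5)] P(2,4) assms(5)
    by (auto simp: covering_matchings_def matchings_def HL)
qed

lemma covering_matchings_insert_edge:
  assumes "x \<in> Hi" "y \<in> Lo" "Hi \<inter> Lo = {}"
    and "Q \<in> covering_matchings (Hi - {x}) (Lo - {y}) m" "finite (Hi \<union> Lo)"
  shows "insert {x, y} Q \<in> covering_matchings Hi Lo (Suc m)" and "{x, y} \<notin> Q"
proof -
  have HL: "(Hi \<union> Lo) - {x, y} = (Hi - {x}) \<union> (Lo - {y})" using assms(1-3) by auto
  have "x \<noteq> y" using assms(1-3) by blast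
  then have xy: "{x, y} \<in> two_subsets (Hi \<union> Lo)"
    using assms(1,2) by (auto simp: two_subsets_def)
  have Q: "matching ((Hi \<union> Lo) - {x, y}) Q" "card Q = m" "Hi - {x} \<subseteq> \<Union>Q"
      "\<forall>q\<in>Q. \<not> q \<subseteq> Hi - {x}"
    using assms(4) by (auto simp: covering_matchings_def matchings_def HL)
  show "{x, y} \<notin> Q" using matching_insert(2)[OF xy Q(1)] .
  moreover have "finite Q" using Q(1) assms(5) by (meson finite_Diff matching_finite)
  moreover have "\<not> q \<subseteq> Hi" if "q \<in> Q" for q
    using Q(4) Union_matching_subset[OF Q(1)] that by blast
  ultimately show "insert {x, y} Q \<in> covering_matchings Hi Lo (Suc m)"
    using matching_insert(1)[OF xy Q(1)] Q(2,3) assms(1-3)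
    by (auto simp: covering_matchings_def matchings_def)
qed

lemma covering_matchings_edge_bij:
  assumes "x \<in> Hi" "y \<in> Lo" "Hi \<inter> Lo = {}" "finite (Hi \<union> Lo)"
  shows "bij_betw (\<lambda>P. P - {{x, y}}) {P \<in> covering_matchings Hi Lo (Suc m). {x, y} \<in> P}
           (covering_matchings (Hi - {x}) (Lo - {y}) m)"
  by (rule bij_betw_byWitness[where f' = "insert {x, y}"])
    (use covering_matchings_remove_edge[OF assms(1-3) _ _ assms(4)]
         covering_matchings_insert_edge[OF assms(1-3) _ assms(4)] in \<open>auto simp: insert_absorb\<close>)

lemma matching_partner_unique:
  assumes "matching A P" "{x, y} \<in> P" "{x, y'} \<in> P"
  shows "y = y'"
proof (rule ccontr)
  assume "y \<noteq> y'"
  then have "{x, y} \<noteq> {x, y'}" by (auto simp: doubleton_eq_iff)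
  moreover have "pairwise disjnt P" using assms(1) by (simp add: matching_def)
  ultimately have "disjnt {x, y} {x, y'}" using pairwiseD(1) assms(2,3) by metis
  then show False by simp
qed

lemma card_covering_matchings_Suc:
  assumes x: "x \<in> Hi" and "finite Hi" "finite Lo" "Hi \<inter> Lo = {}"
  shows "card (covering_matchings Hi Lo (Suc m))
           = (\<Sum>y\<in>Lo. card (covering_matchings (Hi - {x}) (Lo - {y}) m))"
proof -
  let ?E = "\<lambda>y. {P \<in> covering_matchings Hi Lo (Suc m). {x, y} \<in> P}"
  have split: "covering_matchings Hi Lo (Suc m) = (\<Union>y\<in>Lo. ?E y)"
  proof (intro equalityI subsetI)
    fix P assume P: "P \<in> covering_matchings Hi Lo (Suc m)"
    then obtain y where "y \<in> Lo" "{x, y} \<in> P"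
      by (rule covering_matching_partner[OF _ x assms(4)])
    with P show "P \<in> (\<Union>y\<in>Lo. ?E y)" by blast
  qed blast
  have fin: "finite (?E y)" for y
    using finite_covering_matchings[of Hi Lo "Suc m"] assms by auto
  have "y = y'" if "P \<in> ?E y" "P \<in> ?E y'" for P y y'
    using that by (intro matching_partner_unique[of "Hi \<union> Lo" P x])
      (auto simp: covering_matchings_def matchings_def)
  then have disj: "?E y \<inter> ?E y' = {}" if "y \<noteq> y'" for y y'
    using that by blast
  have "card (\<Union>y\<in>Lo. ?E y) = (\<Sum>y\<in>Lo. card (?E y))"
    using assms(3) fin disj by (intro card_UN_disjoint) auto
  then have "card (covering_matchings Hi Lo (Suc m)) = (\<Sum>y\<in>Lo. card (?E y))"
    by (subst split)
  also have "\<dots> = (\<Sum>y\<in>Lo. card (covering_matchings (Hi - {x}) (Lo - {y}) m))"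
    using assms by (intro sum.cong refl bij_betw_same_card[OF covering_matchings_edge_bij]) auto
  finally show ?thesis .
qed

lemma card_covering_matchings:
  assumes "finite Hi" "finite Lo" "Hi \<inter> Lo = {}"
  shows "real (card (covering_matchings Hi Lo m)) = num_covering_matchings (card Hi) (card Lo) m"
  using assms
proof (induction "card Hi" arbitrary: Hi Lo m)
  case 0
  then show ?case by (simp add: covering_matchings_empty card_matchings)
next
  case (Suc k)
  then obtain x where x: "x \<in> Hi" by (metis card.empty ex_in_conv nat.simps(3))
  show ?case
  proof (cases m)
    case 0
    have "covering_matchings Hi Lo 0 = {}"
      using x Suc.prems by (intro covering_matchings_0) auto
    then show ?thesis using 0 Suc.hyps(2) by (metis card.empty num_covering_matchings.simps(2) of_nat_0)
  next
    case m: (Suc m')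
    have "real (card (covering_matchings (Hi - {x}) (Lo - {y}) m'))
        = num_covering_matchings k (card Lo - 1) m'" if "y \<in> Lo" for y
    proof -
      have "real (card (covering_matchings (Hi - {x}) (Lo - {y}) m'))
          = num_covering_matchings (card (Hi - {x})) (card (Lo - {y})) m'"
        by (rule Suc.hyps(1)) (use Suc.prems Suc.hyps(2) x in auto)
      moreover have "card (Hi - {x}) = k" using Suc.hyps(2) x by simp
      moreover have "card (Lo - {y}) = card Lo - 1" using Suc.prems(2) that by simp
      ultimately show ?thesis by simp
    qed
    then have "real (card (covering_matchings Hi Lo m))
        = real (card Lo) * num_covering_matchings k (card Lo - 1) m'"
      unfolding m card_covering_matchings_Suc[OF x Suc.prems] of_nat_sum by simp
    then show ?thesis
      unfolding m Suc.hyps(2)[symmetric] by simp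
  qed
qed

lemma num_covering_matchings_eq:
  "num_covering_matchings k l m =
     (if k \<le> m then (\<Prod>t=1..k. real l + 1 - real t) * num_matchings (l - k) (m - k) else 0)"
proof (induction k l m rule: num_covering_matchings.induct)
  case (3 k l m)
  have "(\<Prod>t=1..Suc k. real l + 1 - real t) = real l * (\<Prod>t=1..k. real l - real t)"
    by (simp add: prod.atLeast_Suc_atMost prod.shift_bounds_cl_Suc_ivl del: prod.cl_ivl_Suc)
  moreover have "(\<Prod>t=1..k. real (l - 1) + 1 - real t) = (\<Prod>t=1..k. real l - real t)" if "l \<noteq> 0"
    using that by (simp add: of_nat_diff)
  ultimately show ?case
    using 3 by (cases "l = 0") (simp_all del: prod.cl_ivl_Suc)
qed simp_all

section \<open>Possible wirings\<close>

lemma B_in_devices [simp]: "B a \<in> devices I S \<longleftrightarrow> 1 \<le> a \<and> a \<le> I"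
  and W_in_devices [simp]: "W a \<in> devices I S \<longleftrightarrow> 1 \<le> a \<and> a \<le> S"
  by (auto simp: devices_def)

text \<open>Its partner is no infected device of smaller index, since that
  device had its turn earlier, when \<open>B a\<close> was still free, and so was paired by then.\<close>

definition chosen_by :: "nat \<Rightarrow> nat \<Rightarrow> nat \<Rightarrow> dev set \<Rightarrow> bool" where
  "chosen_by I S a p \<longleftrightarrow> 1 \<le> a \<and> (\<exists>d\<in>devices I S. p = {B a, d} \<and> (\<forall>c. d = B c \<longrightarrow> a < c))"

definition settled :: "nat \<Rightarrow> nat \<Rightarrow> dev set set \<Rightarrow> nat \<Rightarrow> bool" where
  "settled I S M a \<longleftrightarrow> B a \<in> \<Union>M \<or> (devices I S - {B a} \<subseteq> \<Union>M \<and> (\<forall>p\<in>M. \<exists>c<a. B c \<in> p))"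

text \<open>A description of the partial wirings after step \<open>t\<close> that does not refer to the order of
  the choices: \<open>settled\<close> says that an infected device which is still unpaired had nothing left
  to choose at its turn.\<close>

definition wiring_inv :: "nat \<Rightarrow> nat \<Rightarrow> nat \<Rightarrow> dev set set \<Rightarrow> bool" where
  "wiring_inv I S t M \<longleftrightarrow>
     (\<forall>p\<in>M. \<exists>a\<le>t. chosen_by I S a p) \<and> pairwise disjnt M \<and> (\<forall>a\<in>{1..t}. settled I S M a)"

lemma wiring_invD:
  assumes "wiring_inv I S t M"
  shows "\<forall>p\<in>M. \<exists>a\<le>t. chosen_by I S a p" "pairwise disjnt M" "\<forall>a\<in>{1..t}. settled I S M a"
  using assms by (simp_all add: wiring_inv_def)

lemma chosen_byE:
  assumes "chosen_by I S a p"
  obtains d where "d \<in> devices I S" "p = {B a, d}" "\<forall>c. d = B c \<longrightarrow> a < c"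
  using assms by (auto simp: chosen_by_def)

lemma chosen_by_le: "chosen_by I S a p \<Longrightarrow> B c \<in> p \<Longrightarrow> a \<le> c"
  by (fastforce simp: chosen_by_def)

lemma chosen_by_unique: "chosen_by I S a p \<Longrightarrow> chosen_by I S a' p \<Longrightarrow> a = a'"
  by (metis antisym chosen_by_le chosen_by_def insertI1)

lemma wiring_inv_idle:
  assumes inv: "wiring_inv I S t M" and "t < I"
    and idle: "B (Suc t) \<notin> unpaired I S M \<or> unpaired I S M - {B (Suc t)} = {}"
  shows "wiring_inv I S (Suc t) M"
proof -
  note chosen = wiring_invD(1)[OF inv] and disj = wiring_invD(2)[OF inv]
    and old = wiring_invD(3)[OF inv]
  have "settled I S M (Suc t)"
  proof (cases "B (Suc t) \<in> \<Union>M")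
    case False
    with idle \<open>t < I\<close> have "devices I S - {B (Suc t)} \<subseteq> \<Union>M"
      by (auto simp: unpaired_def)
    moreover have "\<exists>c<Suc t. B c \<in> p" if p: "p \<in> M" for p
    proof -
      obtain a where "a \<le> t" "chosen_by I S a p" using chosen p by blast
      then show ?thesis by (auto simp: chosen_by_def intro!: exI[of _ a])
    qed
    ultimately show ?thesis by (simp add: settled_def)
  qed (simp add: settled_def)
  then have "\<forall>a\<in>{1..Suc t}. settled I S M a" using old by (auto simp: le_Suc_eq)
  moreover have "\<forall>p\<in>M. \<exists>a\<le>Suc t. chosen_by I S a p" using chosen le_SucI by blast
  ultimately show ?thesis using disj by (simp add: wiring_inv_def)
qed

lemma wiring_inv_choose:
  assumes inv: "wiring_inv I S t M" and "t < I"
    and b: "B (Suc t) \<in> unpaired I S M" and d: "d \<in> unpaired I S M" "d \<noteq> B (Suc t)"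
  shows "wiring_inv I S (Suc t) (insert {B (Suc t), d} M)"
proof -
  note chosen = wiring_invD(1)[OF inv] and disj = wiring_invD(2)[OF inv]
    and old = wiring_invD(3)[OF inv]
  txt \<open>As \<open>B (Suc t)\<close> is still free, no earlier device was left without a choice.\<close>
  have covered: "B a \<in> \<Union>M" if "a \<in> {1..t}" for a
  proof -
    have "B (Suc t) \<in> devices I S - {B a}" "B (Suc t) \<notin> \<Union>M"
      using b that by (auto simp: unpaired_def)
    moreover have "settled I S M a" using old that by blast
    ultimately show ?thesis unfolding settled_def by blast
  qed
  have "Suc t < c" if "d = B c" for c
  proof (rule ccontr)
    assume "\<not> Suc t < c"
    moreover have "1 \<le> c" "d \<notin> \<Union>M" using d that by (auto simp: unpaired_def)
    ultimately show False using covered[of c] d(2) that by (auto simp: le_Suc_eq)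
  qed
  then have "chosen_by I S (Suc t) {B (Suc t), d}"
    using d by (auto simp: chosen_by_def unpaired_def)
  then have "\<forall>p\<in>insert {B (Suc t), d} M. \<exists>a\<le>Suc t. chosen_by I S a p"
    using chosen le_SucI by blast
  moreover have "pairwise disjnt (insert {B (Suc t), d} M)"
    using disj b d by (auto simp: pairwise_insert unpaired_def disjnt_def)
  moreover have "\<forall>a\<in>{1..Suc t}. settled I S (insert {B (Suc t), d} M) a"
    using covered by (auto simp: settled_def le_Suc_eq)
  ultimately show ?thesis by (simp add: wiring_inv_def)
qed

lemma reach_wiring_inv: "reach I S t M \<Longrightarrow> t \<le> I \<and> wiring_inv I S t M"
proof (induction rule: reach.induct)
  case start
  then show ?case by (simp add: wiring_inv_def)
next
  case (idle t M)
  then show ?case using wiring_inv_idle by simp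
next
  case (choose t M d)
  then show ?case using wiring_inv_choose by simp
qed

text \<open>The partial wiring after step \<open>t\<close> of a run of the process ending in \<open>M\<close>.\<close>

definition chosen_before :: "nat \<Rightarrow> nat \<Rightarrow> dev set set \<Rightarrow> nat \<Rightarrow> dev set set" where
  "chosen_before I S M t = {p \<in> M. \<exists>a\<le>t. chosen_by I S a p}"

lemma chosen_before_Suc_choose:
  assumes inv: "wiring_inv I S I M" and "t < I" and p: "p \<in> M" "chosen_by I S (Suc t) p"
  obtains d where "p = {B (Suc t), d}" "d \<noteq> B (Suc t)"
    "B (Suc t) \<in> unpaired I S (chosen_before I S M t)" "d \<in> unpaired I S (chosen_before I S M t)"
    "chosen_before I S M (Suc t) = insert p (chosen_before I S M t)"
proof -
  note disj = wiring_invD(2)[OF inv]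
  obtain d where d: "d \<in> devices I S" "p = {B (Suc t), d}" "\<forall>c. d = B c \<longrightarrow> Suc t < c"
    using p(2) by (rule chosen_byE)
  have "disjnt p q" if q: "q \<in> chosen_before I S M t" for q
  proof -
    obtain a where "q \<in> M" "a \<le> t" "chosen_by I S a q"
      using q by (auto simp: chosen_before_def)
    moreover from this have "q \<noteq> p" using chosen_by_unique[OF _ p(2)] by force
    ultimately show ?thesis using disj p(1) by (simp add: pairwiseD)
  qed
  then have "B (Suc t) \<in> unpaired I S (chosen_before I S M t)"
    "d \<in> unpaired I S (chosen_before I S M t)"
    using d \<open>t < I\<close> by (auto simp: unpaired_def disjnt_def)
  moreover have "chosen_before I S M (Suc t) = insert p (chosen_before I S M t)"
  proof (intro equalityI subsetI)
    fix q assume "q \<in> chosen_before I S M (Suc t)"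
    then obtain a where q: "q \<in> M" "a \<le> Suc t" "chosen_by I S a q"
      by (auto simp: chosen_before_def)
    show "q \<in> insert p (chosen_before I S M t)"
    proof (cases "a = Suc t")
      case True
      then have "\<not> disjnt q p" using q(3) d(2) by (auto simp: chosen_by_def disjnt_def)
      then have "q = p" using disj q(1) p(1) by (meson pairwiseD)
      then show ?thesis by simp
    next
      case False
      then show ?thesis using q by (auto simp: chosen_before_def)
    qed
  qed (use p in \<open>auto simp: chosen_before_def intro: le_SucI\<close>)
  moreover have "d \<noteq> B (Suc t)" using d(3) by blast
  ultimately show thesis using that d(2) by blast
qed

lemma chosen_before_Suc_idle:
  assumes inv: "wiring_inv I S I M" and "t < I" and none: "\<not> (\<exists>p\<in>M. chosen_by I S (Suc t) p)"
  shows "chosen_before I S M (Suc t) = chosen_before I S M t"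
    and "B (Suc t) \<notin> unpaired I S (chosen_before I S M t)
           \<or> unpaired I S (chosen_before I S M t) - {B (Suc t)} = {}"
proof -
  show "chosen_before I S M (Suc t) = chosen_before I S M t"
    using none by (auto simp: chosen_before_def le_Suc_eq)
  show "B (Suc t) \<notin> unpaired I S (chosen_before I S M t)
           \<or> unpaired I S (chosen_before I S M t) - {B (Suc t)} = {}"
  proof (cases "B (Suc t) \<in> \<Union>M")
    case True
    then obtain q where q: "q \<in> M" "B (Suc t) \<in> q" by blast
    then obtain a where a: "a \<le> I" "chosen_by I S a q" using wiring_invD(1)[OF inv] by blast
    then have "a \<le> t"
      using chosen_by_le[OF a(2) q(2)] none q(1) by (cases "a = Suc t") auto
    then have "q \<in> chosen_before I S M t" using q(1) a(2) by (auto simp: chosen_before_def)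
    then show ?thesis using q(2) by (auto simp: unpaired_def)
  next
    case False
    moreover have "settled I S M (Suc t)" using wiring_invD(3)[OF inv] \<open>t < I\<close> by simp
    ultimately have all: "devices I S - {B (Suc t)} \<subseteq> \<Union>M" "\<forall>q\<in>M. \<exists>c<Suc t. B c \<in> q"
      by (auto simp: settled_def)
    have "chosen_before I S M t = M"
    proof (intro equalityI subsetI)
      fix q assume q: "q \<in> M"
      then obtain c a where c: "c < Suc t" "B c \<in> q" and a: "chosen_by I S a q"
        using all(2) wiring_invD(1)[OF inv] by blast
      then have "a \<le> t" using chosen_by_le[OF a c(2)] by simp
      then show "q \<in> chosen_before I S M t"
        using q a by (auto simp: chosen_before_def)
    qed (simp add: chosen_before_def)
    then show ?thesis using all(1) by (auto simp: unpaired_def)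
  qed
qed

lemma reach_chosen_before:
  assumes inv: "wiring_inv I S I M"
  shows "t \<le> I \<Longrightarrow> reach I S t (chosen_before I S M t)"
proof (induction t)
  case 0
  have "chosen_before I S M 0 = {}" by (auto simp: chosen_before_def chosen_by_def)
  then show ?case by (simp add: reach.start)
next
  case (Suc t)
  then have IH: "reach I S t (chosen_before I S M t)" and "t < I" by simp_all
  show ?case
  proof (cases "\<exists>p\<in>M. chosen_by I S (Suc t) p")
    case True
    then obtain p where p: "p \<in> M" "chosen_by I S (Suc t) p" by blast
    obtain d where "p = {B (Suc t), d}" "d \<noteq> B (Suc t)"
      "B (Suc t) \<in> unpaired I S (chosen_before I S M t)" "d \<in> unpaired I S (chosen_before I S M t)"
      "chosen_before I S M (Suc t) = insert p (chosen_before I S M t)"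
      by (rule chosen_before_Suc_choose[OF inv \<open>t < I\<close> p])
    then show ?thesis using reach.choose[OF IH \<open>t < I\<close>] by simp
  next
    case False
    show ?thesis
      unfolding chosen_before_Suc_idle(1)[OF inv \<open>t < I\<close> False]
      by (rule reach.idle[OF IH \<open>t < I\<close> chosen_before_Suc_idle(2)[OF inv \<open>t < I\<close> False]])
  qed
qed

lemma possible_wiring_iff_wiring_inv: "possible_wiring I S M \<longleftrightarrow> wiring_inv I S I M"
proof
  assume "wiring_inv I S I M"
  moreover from this have "chosen_before I S M I = M"
    by (auto simp: chosen_before_def dest: wiring_invD(1))
  ultimately show "possible_wiring I S M"
    using reach_chosen_before[of I S M I] by (simp add: possible_wiring_def)
qed (simp add: possible_wiring_def reach_wiring_inv)

section \<open>Sets of bb-pairings\<close>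

lemma is_inf_B [simp]: "is_inf (B a)" and is_inf_W [simp]: "\<not> is_inf (W y)"
  by (auto simp: is_inf_def)

lemma bb_pairings_subset: "bb_pairings M \<subseteq> M"
  by (auto simp: bb_pairings_def)

lemma two_subsets_infectedE:
  assumes "p \<in> two_subsets (B ` {1..I})"
  obtains a c where "p = {B a, B c}" "1 \<le> a" "a < c" "c \<le> I"
proof -
  obtain x y where "p = {x, y}" "x \<noteq> y" "x \<in> B ` {1..I}" "y \<in> B ` {1..I}"
    using assms by (auto simp: two_subsets_def card_2_iff)
  then obtain a c where ac: "p = {B a, B c}" "a \<noteq> c" "a \<in> {1..I}" "c \<in> {1..I}" by blast
  show thesis
  proof (cases "a < c")
    case True
    with ac that[of a c] show ?thesis by auto
  next
    case False
    with ac that[of c a] show ?thesis by (auto simp: insert_commute)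
  qed
qed

lemma matching_bb_pairings:
  assumes "wiring_inv I S I M"
  shows "matching (B ` {1..I}) (bb_pairings M)"
proof -
  have "p \<in> two_subsets (B ` {1..I})" if p: "p \<in> bb_pairings M" for p
  proof -
    obtain a where "a \<le> I" "chosen_by I S a p"
      using wiring_invD(1)[OF assms] p by (auto simp: bb_pairings_def)
    then obtain d where d: "1 \<le> a" "a \<le> I" "d \<in> devices I S" "p = {B a, d}" "\<forall>c. d = B c \<longrightarrow> a < c"
      by (auto simp: chosen_by_def)
    moreover obtain c where "d = B c"
      using p d(4) by (auto simp: bb_pairings_def is_inf_def)
    ultimately show ?thesis by (auto simp: two_subsets_def)
  qed
  then show ?thesis
    using wiring_invD(2)[OF assms] pairwise_subset[OF _ bb_pairings_subset]
    by (auto simp: matching_def)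
qed

lemma card_unmatched:
  assumes "matching (B ` {1..I}) P"
  shows "card (B ` {1..I} - \<Union>P) = I - 2 * card P"
proof -
  have "card (B ` {1..I}) = I" by (simp add: card_image inj_on_def)
  then show ?thesis
    using card_Union_matching[OF _ assms] Union_matching_subset[OF assms]
    by (simp add: card_Diff_subset finite_subset)
qed

lemma card_unmatched_le_if_all_paired:
  assumes inv: "wiring_inv I S I M" and paired: "\<forall>a\<in>{1..I}. B a \<in> \<Union>M"
  shows "card (B ` {1..I} - \<Union>(bb_pairings M)) \<le> S"
proof -
  let ?U = "B ` {1..I} - \<Union>(bb_pairings M)"
  have "\<exists>w\<in>W ` {1..S}. {x, w} \<in> M" if x: "x \<in> ?U" for x
  proof -
    obtain q where q: "q \<in> M" "x \<in> q" using x paired by auto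
    then obtain a e where "chosen_by I S a q" "e \<in> devices I S" "q = {B a, e}"
      using wiring_invD(1)[OF inv] by (meson chosen_byE)
    moreover have "q \<notin> bb_pairings M" using q x by blast
    ultimately obtain y where "e = W y" "y \<in> {1..S}" "x = B a"
      using q x by (cases e) (auto simp: bb_pairings_def)
    then show ?thesis using q \<open>q = {B a, e}\<close> by auto
  qed
  then obtain f where f: "\<And>x. x \<in> ?U \<Longrightarrow> f x \<in> W ` {1..S} \<and> {x, f x} \<in> M"
    by metis
  have "inj_on f ?U"
  proof (rule inj_onI)
    fix x x' assume x: "x \<in> ?U" and x': "x' \<in> ?U" and "f x = f x'"
    then have "\<not> disjnt {x, f x} {x', f x'}" by (simp add: disjnt_def)
    then have "{x, f x} = {x', f x'}"
      using f[OF x] f[OF x'] wiring_invD(2)[OF inv] by (meson pairwiseD)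
    moreover have "x \<noteq> f x'" using x f[OF x'] by auto
    ultimately show "x = x'" by (auto simp: doubleton_eq_iff)
  qed
  then have "card ?U \<le> card (W ` {1..S})"
    using f by (intro card_inj_on_le) auto
  also have "\<dots> = S" by (simp add: card_image inj_on_def)
  finally show ?thesis .
qed

lemma bb_pairings_covering_matching:
  assumes inv: "wiring_inv I S I M" and u: "u \<in> {1..I}" "B u \<notin> \<Union>M"
  shows "bb_pairings M \<in> covering_matchings (B ` {u+1..I}) (B ` {1..u-1}) (card (bb_pairings M))"
proof -
  let ?P = "bb_pairings M" and ?H = "B ` {u+1..I}" and ?L = "B ` {1..u-1}"
  have "settled I S M u" using wiring_invD(3)[OF inv] u(1) by blast
  with u have all: "devices I S - {B u} \<subseteq> \<Union>M" "\<forall>p\<in>M. \<exists>c<u. B c \<in> p"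
    by (auto simp: settled_def)
  have HL: "?H \<union> ?L = B ` {1..I} - {B u}" using u(1) by (auto simp: image_iff)
  have "matching (B ` {1..I}) ?P" by (rule matching_bb_pairings[OF inv])
  moreover have "p \<subseteq> ?H \<union> ?L" if "p \<in> ?P" for p
    using that u(2) bb_pairings_subset Union_matching_subset[OF calculation]
    unfolding HL by blast
  ultimately have m: "matching (?H \<union> ?L) ?P"
    by (auto simp: matching_def two_subsets_def)
  txt \<open>Every pair was chosen before \<open>u\<close>, so a device above \<open>u\<close> was chosen by one below.\<close>
  have cov: "x \<in> \<Union>?P" if x: "x \<in> ?H" for x
  proof -
    obtain c where c: "x = B c" "u < c" "c \<le> I" using x by auto
    then have "x \<in> devices I S - {B u}" using u(1) by simp
    then obtain q where q: "q \<in> M" "x \<in> q" using all(1) by blast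
    moreover obtain c' where c': "c' < u" "B c' \<in> q" using all(2) q(1) by blast
    moreover obtain a e where "q = {B a, e}"
      using q(1) wiring_invD(1)[OF inv] by (meson chosen_byE)
    ultimately have "q = {B c', B c}" using c by auto
    with q(1) have "q \<in> ?P" by (simp add: bb_pairings_def)
    with q(2) show ?thesis by blast
  qed
  have "\<not> p \<subseteq> ?H" if p: "p \<in> ?P" for p
  proof -
    obtain c where "c < u" "B c \<in> p" using all(2) bb_pairings_subset p by blast
    then show ?thesis by auto
  qed
  with m cov show ?thesis by (simp add: covering_matchings_def matchings_def subset_iff)
qed

definition extend_matching :: "dev set set \<Rightarrow> dev set \<Rightarrow> (dev \<Rightarrow> dev) \<Rightarrow> dev set set" where
  "extend_matching P U g = P \<union> (\<lambda>x. {x, g x}) ` U"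

context
  fixes I S :: nat and P :: "dev set set" and U :: "dev set" and g :: "dev \<Rightarrow> dev"
  assumes P: "matching (B ` {1..I}) P" and U: "U \<subseteq> B ` {1..I} - \<Union>P"
    and g: "inj_on g U" "g ` U \<subseteq> W ` {1..S}"
begin

lemma extend_matching_cases:
  assumes "p \<in> extend_matching P U g"
  obtains a c where "p \<in> P" "p = {B a, B c}" "1 \<le> a" "a < c" "c \<le> I"
    | x a y where "x \<in> U" "p = {x, g x}" "x = B a" "a \<in> {1..I}" "g x = W y" "y \<in> {1..S}"
proof -
  consider "p \<in> P" | x where "x \<in> U" "p = {x, g x}"
    using assms by (auto simp: extend_matching_def)
  then show thesis
  proof cases
    case 1
    moreover from this have "p \<in> two_subsets (B ` {1..I})" using P by (auto simp: matching_def)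
    ultimately show ?thesis using that(1) two_subsets_infectedE by metis
  next
    case 2
    moreover obtain a y where "x = B a" "a \<in> {1..I}" "g x = W y" "y \<in> {1..S}"
      using 2(1) U g(2) by blast
    ultimately show ?thesis using that(2) by blast
  qed
qed

lemma extend_matching_chosen:
  assumes "p \<in> extend_matching P U g"
  shows "\<exists>a\<le>I. chosen_by I S a p"
  using assms
proof (cases rule: extend_matching_cases)
  case (1 a c)
  then show ?thesis by (auto simp: chosen_by_def intro!: exI[of _ a] bexI[of _ "B c"])
next
  case (2 x a y)
  then show ?thesis by (auto simp: chosen_by_def intro!: exI[of _ a] bexI[of _ "W y"])
qed

lemma pairwise_disjnt_extend_matching: "pairwise disjnt (extend_matching P U g)"
proof -
  have PP: "pairwise disjnt P" using P by (simp add: matching_def)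
  have PU: "disjnt p {x, g x}" if p: "p \<in> P" and x: "x \<in> U" for p x
  proof -
    have "p \<subseteq> B ` {1..I}" "x \<notin> p" using P U p x by (auto simp: matching_def two_subsets_def)
    moreover obtain y where "g x = W y" using g(2) x by blast
    ultimately show ?thesis by (auto simp: disjnt_def)
  qed
  have UU: "disjnt {x, g x} {x', g x'}" if x: "x \<in> U" "x' \<in> U" "x \<noteq> x'" for x x'
  proof -
    have "g x \<noteq> g x'" using g(1) x by (auto simp: inj_on_def)
    moreover have "x \<in> range B" "x' \<in> range B" using U x(1,2) by auto
    moreover have "g x \<in> range W" "g x' \<in> range W" using g(2) x(1,2) by auto
    ultimately show ?thesis using x(3) by (auto simp: disjnt_def)
  qed
  show ?thesis
    unfolding pairwise_def extend_matching_def
  proof (intro ballI impI)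
    fix p q assume "p \<in> P \<union> (\<lambda>x. {x, g x}) ` U" "q \<in> P \<union> (\<lambda>x. {x, g x}) ` U" "p \<noteq> q"
    then consider "p \<in> P" "q \<in> P" | x where "p \<in> P" "x \<in> U" "q = {x, g x}"
      | x where "q \<in> P" "x \<in> U" "p = {x, g x}"
      | x x' where "x \<in> U" "x' \<in> U" "x \<noteq> x'" "p = {x, g x}" "q = {x', g x'}"
      by blast
    then show "disjnt p q"
    proof cases
      case 1
      then show ?thesis using PP \<open>p \<noteq> q\<close> by (simp add: pairwiseD)
    qed (use PU UU in \<open>auto simp: disjnt_sym\<close>)
  qed
qed

lemma bb_pairings_extend_matching: "bb_pairings (extend_matching P U g) = P"
proof -
  have "p \<in> bb_pairings (extend_matching P U g) \<longleftrightarrow> p \<in> P"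
    if "p \<in> extend_matching P U g" for p
    using that
  proof (cases rule: extend_matching_cases)
    case (2 x a y)
    then have "p \<notin> P" using U by blast
    with 2 show ?thesis by (auto simp: bb_pairings_def)
  qed (auto simp: bb_pairings_def extend_matching_def)
  then show ?thesis by (auto simp: bb_pairings_def extend_matching_def)
qed

end

definition bb_pairing_sets :: "nat \<Rightarrow> nat \<Rightarrow> nat \<Rightarrow> dev set set set" where
  "bb_pairing_sets I S j = {bb_pairings M | M. possible_wiring I S M \<and> card (bb_pairings M) = j}"

lemma bb_pairing_setsI:
  assumes P: "matching (B ` {1..I}) P" "card P = j"
    and g: "U \<subseteq> B ` {1..I} - \<Union>P" "inj_on g U" "g ` U \<subseteq> W ` {1..S}"
    and "\<forall>a\<in>{1..I}. settled I S (extend_matching P U g) a"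
  shows "P \<in> bb_pairing_sets I S j"
proof -
  have "wiring_inv I S I (extend_matching P U g)"
    using extend_matching_chosen[OF P(1) g] pairwise_disjnt_extend_matching[OF P(1) g] assms(6)
    by (simp add: wiring_inv_def)
  with P(2) show ?thesis
    using bb_pairings_extend_matching[OF P(1) g]
    by (auto simp: bb_pairing_sets_def possible_wiring_iff_wiring_inv)
qed

lemma matchings_subset_bb_pairing_sets:
  assumes "I - 2 * j \<le> S"
  shows "matchings (B ` {1..I}) j \<subseteq> bb_pairing_sets I S j"
proof
  fix P assume "P \<in> matchings (B ` {1..I}) j"
  then have P: "matching (B ` {1..I}) P" "card P = j" by (auto simp: matchings_def)
  let ?U = "B ` {1..I} - \<Union>P"
  have "card ?U \<le> card (W ` {1..S})"
    using card_unmatched[OF P(1)] P(2) assms by (simp add: card_image inj_on_def)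
  then obtain g where g: "g ` ?U \<subseteq> W ` {1..S}" "inj_on g ?U"
    using card_le_inj[of ?U "W ` {1..S}"] by auto
  have "B a \<in> \<Union>(extend_matching P ?U g)" if "a \<in> {1..I}" for a
    using that by (auto simp: extend_matching_def)
  then show "P \<in> bb_pairing_sets I S j"
    by (intro bb_pairing_setsI[OF P subset_refl g(2,1)]) (simp add: settled_def)
qed

lemma covering_matching_pair_below:
  assumes "P \<in> covering_matchings (B ` {h+1..I}) (B ` {1..h-1}) j" "p \<in> P"
  shows "\<exists>c<h. B c \<in> p"
proof -
  have "\<not> p \<subseteq> B ` {h+1..I}" using assms by (simp add: covering_matchings_def)
  then obtain z where z: "z \<in> p" "z \<notin> B ` {h+1..I}" by blast
  have "matching (B ` {h+1..I} \<union> B ` {1..h-1}) P"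
    using assms(1) by (simp add: covering_matchings_def matchings_def)
  then have "z \<in> B ` {h+1..I} \<union> B ` {1..h-1}"
    using assms(2) z(1) Union_matching_subset by blast
  with z(2) obtain c where "z = B c" "c < h" by auto
  with z(1) show ?thesis by blast
qed

lemma covering_matching_unmatched_le:
  assumes "P \<in> covering_matchings (B ` {h+1..I}) (B ` {1..h-1}) j" "B c \<in> B ` {1..I} - \<Union>P"
  shows "c \<le> h"
proof (rule ccontr)
  assume "\<not> c \<le> h"
  then have "B c \<in> B ` {h+1..I}" using assms(2) by auto
  then show False using assms by (auto simp: covering_matchings_def)
qed

lemma covering_matchings_subset_bb_pairing_sets:
  assumes IS: "I = 2 * j + S + 1" and h: "h \<in> {S+1..I}"
  shows "covering_matchings (B ` {h+1..I}) (B ` {1..h-1}) j \<subseteq> bb_pairing_sets I S j"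
proof
  fix P assume cov: "P \<in> covering_matchings (B ` {h+1..I}) (B ` {1..h-1}) j"
  then have P: "matching (B ` {h+1..I} \<union> B ` {1..h-1}) P" "card P = j"
    by (auto simp: covering_matchings_def matchings_def)
  have HL: "B ` {h+1..I} \<union> B ` {1..h-1} \<subseteq> B ` {1..I}" "B h \<notin> B ` {h+1..I} \<union> B ` {1..h-1}"
    using h by auto
  have mP: "matching (B ` {1..I}) P" using P(1) HL(1) by (rule matching_mono)
  have "B h \<in> B ` {1..I} - \<Union>P" using Union_matching_subset[OF P(1)] HL(2) h by auto
  moreover define U where "U = B ` {1..I} - \<Union>P - {B h}"
  ultimately have "card U = card (W ` {1..S})"
    using card_unmatched[OF mP] P(2) IS by (simp add: card_image inj_on_def)
  then obtain g where g: "bij_betw g U (W ` {1..S})"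
    using finite_same_card_bij[of U "W ` {1..S}"] by (auto simp: U_def)
  have "settled I S (extend_matching P U g) a" if a: "a \<in> {1..I}" for a
  proof (cases "a = h")
    case True
    have clean: "W ` {1..S} \<subseteq> \<Union>(extend_matching P U g)"
    proof
      fix w assume "w \<in> W ` {1..S}"
      then obtain x where "x \<in> U" "w = g x" using g by (metis bij_betw_def imageE)
      then show "w \<in> \<Union>(extend_matching P U g)" by (auto simp: extend_matching_def)
    qed
    have "B ` {1..I} - {B h} \<subseteq> \<Union>(extend_matching P U g)"
      by (auto simp: extend_matching_def U_def)
    then have "devices I S - {B h} \<subseteq> \<Union>(extend_matching P U g)"
      unfolding devices_def Un_Diff using subset_trans[OF Diff_subset clean] by (rule Un_least)
    moreover have "\<exists>c<h. B c \<in> p" if p: "p \<in> extend_matching P U g" for p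
    proof (cases "p \<in> P")
      case True
      then show ?thesis by (rule covering_matching_pair_below[OF cov])
    next
      case False
      then obtain x where x: "x \<in> U" "p = {x, g x}" using p by (auto simp: extend_matching_def)
      then obtain c where c: "x = B c" "B c \<in> B ` {1..I} - \<Union>P" "c \<noteq> h"
        by (auto simp: U_def)
      then have "c < h" using covering_matching_unmatched_le[OF cov c(2)] by simp
      with c(1) x(2) show ?thesis by blast
    qed
    ultimately show ?thesis using True by (simp add: settled_def)
  next
    case False
    then have "B a \<in> \<Union>(extend_matching P U g)" using a by (auto simp: extend_matching_def U_def)
    then show ?thesis by (simp add: settled_def)
  qed
  moreover have "U \<subseteq> B ` {1..I} - \<Union>P" "inj_on g U" "g ` U \<subseteq> W ` {1..S}"
    using g by (auto simp: U_def bij_betw_def)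
  ultimately show "P \<in> bb_pairing_sets I S j"
    using bb_pairing_setsI[OF mP P(2)] by blast
qed

lemma bb_pairing_setsE:
  assumes "P \<in> bb_pairing_sets I S j"
  obtains M where "wiring_inv I S I M" "P = bb_pairings M" "card P = j"
  using assms by (auto simp: bb_pairing_sets_def possible_wiring_iff_wiring_inv)

lemma bb_pairing_sets_eq_matchings:
  assumes "I - 2 * j \<le> S"
  shows "bb_pairing_sets I S j = matchings (B ` {1..I}) j"
proof
  show "bb_pairing_sets I S j \<subseteq> matchings (B ` {1..I}) j"
  proof
    fix P assume "P \<in> bb_pairing_sets I S j"
    then obtain M where "wiring_inv I S I M" "P = bb_pairings M" "card P = j"
      by (rule bb_pairing_setsE)
    then show "P \<in> matchings (B ` {1..I}) j"
      using matching_bb_pairings by (simp add: matchings_def)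
  qed
qed (rule matchings_subset_bb_pairing_sets[OF assms])

lemma bb_pairing_sets_dagger:
  assumes IS: "I = 2 * j + S + 1"
  shows "bb_pairing_sets I S j = (\<Union>h\<in>{S+1..I}. covering_matchings (B ` {h+1..I}) (B ` {1..h-1}) j)"
proof
  show "bb_pairing_sets I S j \<subseteq> (\<Union>h\<in>{S+1..I}. covering_matchings (B ` {h+1..I}) (B ` {1..h-1}) j)"
  proof
    fix P assume "P \<in> bb_pairing_sets I S j"
    then obtain M where inv: "wiring_inv I S I M" and P: "P = bb_pairings M" "card P = j"
      by (rule bb_pairing_setsE)
    have unmatched: "card (B ` {1..I} - \<Union>P) = S + 1"
      using card_unmatched[OF matching_bb_pairings[OF inv]] P IS by simp
    then obtain u where u: "u \<in> {1..I}" "B u \<notin> \<Union>M"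
      using card_unmatched_le_if_all_paired[OF inv] P(1) by force
    have cov: "P \<in> covering_matchings (B ` {u+1..I}) (B ` {1..u-1}) j"
      using bb_pairings_covering_matching[OF inv u] P by simp
    have "B ` {1..I} - \<Union>P \<subseteq> B ` {1..u}"
    proof
      fix x assume x: "x \<in> B ` {1..I} - \<Union>P"
      then obtain c where "x = B c" "c \<in> {1..I}" by blast
      with x show "x \<in> B ` {1..u}" using covering_matching_unmatched_le[OF cov] by auto
    qed
    then have "card (B ` {1..I} - \<Union>P) \<le> card (B ` {1..u})" by (intro card_mono) auto
    moreover have "card (B ` {1..u}) = u" by (simp add: card_image inj_on_def)
    ultimately have "S + 1 \<le> u" using unmatched by simp
    with u(1) cov show "P \<in> (\<Union>h\<in>{S+1..I}. covering_matchings (B ` {h+1..I}) (B ` {1..h-1}) j)"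
      by auto
  qed
qed (use covering_matchings_subset_bb_pairing_sets[OF IS] in blast)

section \<open>The counting formula\<close>

lemma Ncount_eq_num_matchings:
  assumes "I - 2 * j \<le> S"
  shows "real (Ncount I S j) = num_matchings I j"
  using card_matchings[of "B ` {1..I}" j]
  by (simp add: Ncount_def bb_pairing_sets_eq_matchings[OF assms, unfolded bb_pairing_sets_def]
      card_image inj_on_def)

lemma covering_matchings_infected_disjoint:
  assumes "h < h'" "h' \<le> I"
  shows "covering_matchings (B ` {h+1..I}) (B ` {1..h-1}) j
           \<inter> covering_matchings (B ` {h'+1..I}) (B ` {1..h'-1}) j = {}"
proof -
  have "False" if P: "P \<in> covering_matchings (B ` {h+1..I}) (B ` {1..h-1}) j"
    "P \<in> covering_matchings (B ` {h'+1..I}) (B ` {1..h'-1}) j" for P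
  proof -
    have "B h' \<in> B ` {h+1..I}" using assms by auto
    then have "B h' \<in> \<Union>P" using P(1) by (auto simp: covering_matchings_def)
    moreover have "matching (B ` {h'+1..I} \<union> B ` {1..h'-1}) P"
      using P(2) by (simp add: covering_matchings_def matchings_def)
    then have "\<Union>P \<subseteq> B ` {h'+1..I} \<union> B ` {1..h'-1}" by (rule Union_matching_subset)
    moreover have "B h' \<notin> B ` {h'+1..I} \<union> B ` {1..h'-1}" by auto
    ultimately show False by blast
  qed
  then show ?thesis by blast
qed

lemma Ncount_dagger:
  assumes IS: "I = 2 * j + S + 1"
  shows "real (Ncount I S j) = (\<Sum>h=S+1..I. num_covering_matchings (I - h) (h - 1) j)"
proof -
  let ?C = "\<lambda>h. covering_matchings (B ` {h+1..I}) (B ` {1..h-1}) j"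
  have "card (\<Union>h\<in>{S+1..I}. ?C h) = (\<Sum>h=S+1..I. card (?C h))"
  proof (rule card_UN_disjoint)
    show "\<forall>h\<in>{S+1..I}. finite (?C h)" by (auto intro: finite_covering_matchings)
    show "\<forall>h\<in>{S+1..I}. \<forall>h'\<in>{S+1..I}. h \<noteq> h' \<longrightarrow> ?C h \<inter> ?C h' = {}"
      using covering_matchings_infected_disjoint
      by (metis atLeastAtMost_iff inf_commute nat_neq_iff)
  qed simp
  moreover have "real (card (?C h)) = num_covering_matchings (I - h) (h - 1) j" for h
  proof -
    have "B ` {h+1..I} \<inter> B ` {1..h-1} = {}" by auto
    then show ?thesis
      using card_covering_matchings[of "B ` {h+1..I}" "B ` {1..h-1}" j]
      by (simp add: card_image inj_on_def)
  qed
  ultimately show ?thesis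
    by (simp add: Ncount_def bb_pairing_sets_dagger[OF IS, unfolded bb_pairing_sets_def] of_nat_sum)
qed

lemma num_matchings_eq_prod_lessThan:
  assumes "2 * j \<le> n + 2"
  shows "num_matchings n j = 1 / fact j * (\<Prod>k<j. (real n - 2 * real k) gchoose 2)"
proof -
  have "(\<Prod>k=1..j. real (n - 2 * (k - 1)) gchoose 2) = (\<Prod>k<j. real (n - 2 * k) gchoose 2)"
    by (simp add: prod.atLeast1_atMost_eq)
  also have "\<dots> = (\<Prod>k<j. (real n - 2 * real k) gchoose 2)"
    using assms by (intro prod.cong) (auto simp: of_nat_diff)
  finally show ?thesis by (simp add: num_matchings_eq)
qed

lemma num_covering_matchings_eq_N_dagger:
  assumes IS: "I = 2 * j + S + 1" and j: "2 \<le> j" and h: "h \<in> {S+1..I}"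
  shows "num_covering_matchings (I - h) (h - 1) j = N_dagger I S h"
proof -
  have j_eq: "(I - S - 1) div 2 = j" using IS by simp
  have "h = I \<or> h = I - 1 \<or> h \<le> I - 2" using h by auto
  then consider "h = I" | "h = I - 1" | "h \<le> I - 2" by blast
  then show ?thesis
  proof cases
    case 1
    then have "num_covering_matchings (I - h) (h - 1) j = num_matchings (I - 1) j" by simp
    also have "\<dots> = 1 / fact j * (\<Prod>k<j. (real I - 1 - 2 * real k) gchoose 2)"
      using IS by (subst num_matchings_eq_prod_lessThan) (auto simp: of_nat_diff)
    finally show ?thesis using 1 unfolding N_dagger_def Let_def j_eq by simp
  next
    case 2
    then have "I - h = Suc 0" "h - 1 = I - 2" using IS by auto
    moreover obtain j' where "j = Suc j'" using j by (cases j) auto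
    ultimately have "num_covering_matchings (I - h) (h - 1) j
        = real (I - 2) * num_matchings (I - 3) (j - 1)"
      by (simp add: diff_diff_left)
    also have "\<dots> = (real I - 2)
        * (1 / fact (j - 1) * (\<Prod>k<j-1. (real I - 3 - 2 * real k) gchoose 2))"
      using IS j by (subst num_matchings_eq_prod_lessThan) (auto simp: of_nat_diff)
    finally show ?thesis using 2 IS j unfolding N_dagger_def Let_def j_eq by simp
  next
    case 3
    have "(\<Prod>t=1..I-h. real (h - 1) + 1 - real t) = (\<Prod>t=1..I-h. real h - real t)"
      using h by (simp add: of_nat_diff)
    then have G: "num_covering_matchings (I - h) (h - 1) j =
        (if I - h \<le> j then (\<Prod>t=1..I-h. real h - real t) * num_matchings (h - 1 - (I - h)) (j - (I - h))
         else 0)"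
      by (simp only: num_covering_matchings_eq)
    have "(\<Prod>t=1..j - (I - h). real (h - 1 - (I - h) - 2 * (t - 1)) gchoose 2)
        = (\<Prod>t=1..j - (I - h). (2 * real h - real I - 1 - 2 * (real t - 1)) gchoose 2)"
      if "I - h < j"
      using that IS h by (intro prod.cong refl arg_cong[where f = "\<lambda>x. x gchoose 2"]) (auto simp: of_nat_diff)
    with 3 h IS G show ?thesis
      unfolding N_dagger_def Let_def j_eq by (auto simp: num_matchings_eq not_less)
  qed
qed

lemma unmatched_le_if_not_dagger_case:
  assumes "L I S \<le> j" "\<not> dagger_case I S j"
  shows "I - 2 * j \<le> S"
  using assms unfolding L_def dagger_case_def by (auto split: if_splits) presburger+

lemma Ncount_dagger_one: "Ncount (S + 3) S 1 = (S + 3 choose 2) - 1"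
proof -
  have "{S+1..S+3} = {S+1, S+2, S+3}" by auto
  then have "real (Ncount (S + 3) S 1)
      = num_covering_matchings 2 S 1 + num_covering_matchings 1 (S + 1) 1
        + num_covering_matchings 0 (S + 2) 1"
    using Ncount_dagger[of "S + 3" 1 S] by simp
  also have "\<dots> = real (S + 1) + (real (S + 2) gchoose 2)" by (simp add: numeral_2_eq_2)
  also have "\<dots> = real ((S + 3) choose 2) - 1"
    by (simp add: binomial_gbinomial gbinomial_prod_rev numeral_2_eq_2 field_simps)
  finally have "real (Ncount (S + 3) S 1) = real ((S + 3) choose 2) - 1" .
  moreover have "0 < (S + 3) choose 2" by simp
  ultimately show ?thesis by (simp add: of_nat_diff)
qed

theorem lemma4:
  fixes I S j :: nat
  assumes "L I S \<le> j" and "j \<le> I div 2"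
  shows "(\<not> dagger_case I S j \<longrightarrow>
            real (Ncount I S j) = 1 / fact j * (\<Prod>k=1..j. real (I - 2 * (k - 1)) gchoose 2))
       \<and> (dagger_case I S j \<and> j = 0 \<longrightarrow> Ncount I S j = 1)
       \<and> (dagger_case I S j \<and> j = 1 \<longrightarrow> Ncount I S j = (I choose 2) - 1)
       \<and> (dagger_case I S j \<and> j \<ge> 2 \<longrightarrow>
            real (Ncount I S j) = (\<Sum>h=S+1..I. N_dagger I S h))"
proof (intro conjI impI)
  assume "\<not> dagger_case I S j"
  with assms(1) show "real (Ncount I S j) = 1 / fact j * (\<Prod>k=1..j. real (I - 2 * (k - 1)) gchoose 2)"
    by (simp add: unmatched_le_if_not_dagger_case Ncount_eq_num_matchings num_matchings_eq)
next
  assume "dagger_case I S j \<and> j = 0"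
  then have "I = S + 1" "j = 0" by (auto simp: dagger_case_def)
  then show "Ncount I S j = 1" using Ncount_dagger[of I j S] by simp
next
  assume "dagger_case I S j \<and> j = 1"
  then have "I = S + 3" "j = 1" by (auto simp: dagger_case_def)
  then show "Ncount I S j = (I choose 2) - 1" using Ncount_dagger_one by simp
next
  assume "dagger_case I S j \<and> 2 \<le> j"
  then have IS: "I = 2 * j + S + 1" and j: "2 \<le> j" by (auto simp: dagger_case_def)
  show "real (Ncount I S j) = (\<Sum>h=S+1..I. N_dagger I S h)"
    unfolding Ncount_dagger[OF IS]
    using num_covering_matchings_eq_N_dagger[OF IS j] by (rule sum.cong[OF refl])
qed

end
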